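(* Let $\mathcal{P}$ be a grid polyomino. List the facets of $\Delta_{\mathcal{P}}$ as $F_0,F_1,\dots,F_s$ with $F_{i+1}<_{\mathrm{lex}}F_i$ for all $i$. Then both of the following hold. (1) For every $j\in[s]$, $$\langle F_0,\dots,F_{j-1}\rangle\cap\langle F_j\rangle=\big\langle\{F_j\setminus\{v\}: v \text{ is the lower right corner of a generalized step of } F_j\}\big\rangle.$$ (2) $F_0,F_1,\dots,F_s$ is a shelling order of $\Delta_{\mathcal{P}}$.
   Context: Grid polyomino: take $I=[(1,1),(m,n)]$ and intervals $H_{ij}=[a_{ij},b_{ij}]$ for $i\in[r]$, $j\in[s]$, with $1<(a_{ij})_1<(b_{ij})_1<m$ and $1<(a_{ij})_2<(b_{ij})_2<n$. Assume the first coordinates of $a_{ij}$ and $b_{ij}$ depend only on $i$, the second coordinates depend only on $j$, $(a_{i+1,j})_1=(b_{ij})_1+1$, and $(a_{i,j+1})_2=(b_{ij})_2+1$. Then $\mathcal{P}$ is the set of unit cells $[v,v+(1,1)]$ in $I$ not contained in any $H_{ij}$. $V(\mathcal{P})$ is its set of vertices. An inner interval of $\mathcal{P}$ is a proper interval $[u,w]$ whose unit cells all lie in $\mathcal{P}$; its anti-diagonal corners are $(u_1,w_2)$ and $(w_1,u_2)$. $\Delta_{\mathcal{P}}$ is the simplicial complex on $V(\mathcal{P})$ whose Stanley–Reisner ideal is the initial ideal of the polyomino ideal $I_{\mathcal{P}}$, taken in the reverse lexicographic order with $x_{(i,j)}>x_{(k,l)}$ if $j>l$, or if $j=l$ and $i>k$.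 Equivalently, its faces are the subsets of $V(\mathcal{P})$ containing no two vertices that are the anti-diagonal corners of an inner interval of $\mathcal{P}$. It is a pure complex. $\langle G_1,\dots,G_t\rangle$ denotes the simplicial complex generated by the sets $G_1,\dots,G_t$. A subset $F'=\{(a,b),(c,d),(e,f)\}$ of a face $F$ is a generalized step of $F$, with lower right corner $(c,d)$, if all of the following hold: - $b=d$, $c=e$, $a<c$ and $d<f$; - no vertex $(t,b)$ with $a<t<c$ lies in $F$; - no vertex $(c,t)$ with $d<t<f$ lies in $F$; - $(c,d)$ is the lower right corner of a cell of $\mathcal{P}$; - $[(a,b),(e,f)]$ is an inner interval of $\mathcal{P}$. Total order on $V(\mathcal{P})$: for $a=(i,j)$ and $b=(k,l)$, set $b<_V a$ if $j>l$, or if $j=l$ and $i>k$. Write each facet as $F=\{a_1,\dots,a_d\}$ with $a_{t+1}<_V a_t$. For two facets $F=\{a_1,\dots,a_d\}$ and $G=\{b_1,\dots,b_d\}$, let $k$ be the least index with $a_k\ne b_k$; then $F<_{\mathrm{lex}}G$ if $a_k<_V b_k$. A shelling order of a pure complex is an ordering $F_0,\dots,F_s$ of its facets such that, for each $j\ge1$, $\langle F_0,\dots,F_{j-1}\rangle\cap\langle F_j\rangle$ is generated by a nonempty set of maximal proper faces of $F_j$. *)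

theory Defs
  imports Main
begin

type_synonym pt = "nat \<times> nat"

text \<open>Grid polyomino data: the interval I = [(1,1),(m,n)] and the holes
  H_ij = [a i j, b i j] for i in [r], j in [s].\<close>
definition grid_data :: "nat \<Rightarrow> nat \<Rightarrow> nat \<Rightarrow> nat \<Rightarrow> (nat \<Rightarrow> nat \<Rightarrow> pt) \<Rightarrow> (nat \<Rightarrow> nat \<Rightarrow> pt) \<Rightarrow> bool" where
  "grid_data m n r s a b \<longleftrightarrow>
     1 \<le> r \<and> 1 \<le> s \<and>
     (\<forall>i\<in>{1..r}. \<forall>j\<in>{1..s}.
        1 < fst (a i j) \<and> fst (a i j) < fst (b i j) \<and> fst (b i j) < m \<and>
        1 < snd (a i j) \<and> snd (a i j) < snd (b i j) \<and> snd (b i j) < n) \<and>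
     (\<forall>i\<in>{1..r}. \<forall>j\<in>{1..s}. \<forall>j'\<in>{1..s}.
        fst (a i j) = fst (a i j') \<and> fst (b i j) = fst (b i j')) \<and>
     (\<forall>i\<in>{1..r}. \<forall>i'\<in>{1..r}. \<forall>j\<in>{1..s}.
        snd (a i j) = snd (a i' j) \<and> snd (b i j) = snd (b i' j)) \<and>
     (\<forall>i\<in>{1..<r}. \<forall>j\<in>{1..s}. fst (a (i+1) j) = fst (b i j) + 1) \<and>
     (\<forall>i\<in>{1..r}. \<forall>j\<in>{1..<s}. snd (a i (j+1)) = snd (b i j) + 1)"

text \<open>The unit cell [v, v+(1,1)] is identified with its lower left corner v.
  It is contained in the interval [p,q] iff p \<le> v and v+(1,1) \<le> q componentwise.\<close>
definition cell_in :: "pt \<Rightarrow> pt \<Rightarrow> pt \<Rightarrow> bool" where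
  "cell_in v p q \<longleftrightarrow> fst p \<le> fst v \<and> fst v + 1 \<le> fst q \<and> snd p \<le> snd v \<and> snd v + 1 \<le> snd q"

definition grid_cells :: "nat \<Rightarrow> nat \<Rightarrow> nat \<Rightarrow> nat \<Rightarrow> (nat \<Rightarrow> nat \<Rightarrow> pt) \<Rightarrow> (nat \<Rightarrow> nat \<Rightarrow> pt) \<Rightarrow> pt set" where
  "grid_cells m n r s a b =
     {v. cell_in v (1,1) (m,n) \<and> \<not> (\<exists>i\<in>{1..r}. \<exists>j\<in>{1..s}. cell_in v (a i j) (b i j))}"

definition cell_vertices :: "pt \<Rightarrow> pt set" where
  "cell_vertices v = {v, (fst v + 1, snd v), (fst v, snd v + 1), (fst v + 1, snd v + 1)}"

definition poly_vertices :: "pt set \<Rightarrow> pt set" where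
  "poly_vertices P = (\<Union>v\<in>P. cell_vertices v)"

definition inner_interval :: "pt set \<Rightarrow> pt \<Rightarrow> pt \<Rightarrow> bool" where
  "inner_interval P u w \<longleftrightarrow> fst u < fst w \<and> snd u < snd w \<and>
     (\<forall>v. cell_in v u w \<longrightarrow> v \<in> P)"

definition Delta :: "pt set \<Rightarrow> pt set set" where
  "Delta P = {F. F \<subseteq> poly_vertices P \<and>
     \<not> (\<exists>u w. inner_interval P u w \<and> (fst u, snd w) \<in> F \<and> (fst w, snd u) \<in> F)}"

definition facets :: "'a set set \<Rightarrow> 'a set set" where
  "facets D = {F \<in> D. \<not> (\<exists>G\<in>D. F \<subset> G)}"

definition gen :: "'a set set \<Rightarrow> 'a set set" where
  "gen \<G> = {H. \<exists>G\<in>\<G>. H \<subseteq> G}"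

definition gen_step_corner :: "pt set \<Rightarrow> pt set \<Rightarrow> pt \<Rightarrow> bool" where
  "gen_step_corner P F q \<longleftrightarrow>
     (\<exists>p r. p \<in> F \<and> q \<in> F \<and> r \<in> F \<and>
        snd p = snd q \<and> fst q = fst r \<and> fst p < fst q \<and> snd q < snd r \<and>
        (\<forall>t. fst p < t \<and> t < fst q \<longrightarrow> (t, snd p) \<notin> F) \<and>
        (\<forall>t. snd q < t \<and> t < snd r \<longrightarrow> (fst q, t) \<notin> F) \<and>
        (\<exists>v\<in>P. (fst v + 1, snd v) = q) \<and>
        inner_interval P p r)"

definition vlt :: "pt \<Rightarrow> pt \<Rightarrow> bool" where
  "vlt b a \<longleftrightarrow> snd a > snd b \<or> (snd a = snd b \<and> fst a > fst b)"

definition desc_list :: "pt set \<Rightarrow> pt list" where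
  "desc_list F = (THE xs. set xs = F \<and> sorted_wrt (\<lambda>x y. vlt y x) xs)"

definition lex_less :: "pt set \<Rightarrow> pt set \<Rightarrow> bool" where
  "lex_less F G \<longleftrightarrow>
     (let as = desc_list F; bs = desc_list G in
       \<exists>k. k < length as \<and> k < length bs \<and> take k as = take k bs \<and> vlt (as ! k) (bs ! k))"

definition max_proper_face :: "'a set \<Rightarrow> 'a set \<Rightarrow> bool" where
  "max_proper_face F G \<longleftrightarrow> G \<subset> F \<and> \<not> (\<exists>H. G \<subset> H \<and> H \<subset> F)"

definition shelling_order :: "'a set set \<Rightarrow> (nat \<Rightarrow> 'a set) \<Rightarrow> nat \<Rightarrow> bool" where
  "shelling_order D Fs N \<longleftrightarrow>
     inj_on Fs {0..N} \<and> Fs ` {0..N} = facets D \<and>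
     (\<forall>j\<in>{1..N}. \<exists>\<M>. \<M> \<noteq> {} \<and> (\<forall>G\<in>\<M>. max_proper_face (Fs j) G) \<and>
        gen (Fs ` {0..<j}) \<inter> gen {Fs j} = gen \<M>)"

end

theory Submission
  imports Defs
begin

text \<open>
  Facets are compared through the \<open><\<^sub>V\<close>-largest vertex in which they differ.
  If \<open>F\<^sub>k\<close> precedes \<open>F\<^sub>j\<close>, the largest vertex \<open>x\<close> of \<open>F\<^sub>k\<close>
  missing from \<open>F\<^sub>j\<close> is not the lower right end of a conflict with \<open>F\<^sub>j\<close> (such a
  partner lies above \<open>x\<close>, hence in \<open>F\<^sub>k\<close>), so by maximality it is the upper left end
  of one; its lowest, then rightmost, partner in \<open>F\<^sub>j\<close> is the corner of a generalized
  step of \<open>F\<^sub>j\<close> that \<open>F\<^sub>k\<close> misses. Conversely, replacing the corner \<open>(c, b)\<close> of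
  a step with ends \<open>(p, b)\<close> and \<open>(c, r)\<close> by the opposite corner \<open>(p, r)\<close> gives a
  face, and every facet containing it precedes \<open>F\<^sub>j\<close>. Hence the faces
  \<open>F\<^sub>j - {corner}\<close> generate the restriction, and they are maximal proper faces.
\<close>

section \<open>Comparing facets\<close>

lemma vlt_irrefl [simp]: "\<not> vlt x x"
  by (auto simp: vlt_def)

lemma vlt_trans: "vlt x y \<Longrightarrow> vlt y z \<Longrightarrow> vlt x z"
  by (auto simp: vlt_def)

lemma vlt_asym: "vlt x y \<Longrightarrow> \<not> vlt y x"
  by (auto simp: vlt_def)

lemma vlt_linear: "x \<noteq> y \<Longrightarrow> vlt x y \<or> vlt y x"
  by (cases x; cases y) (auto simp: vlt_def)

lemma vlt_max_exists:
  assumes "finite A" "A \<noteq> {}"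
  shows "\<exists>x\<in>A. \<forall>y\<in>A. y \<noteq> x \<longrightarrow> vlt y x"
  using assms
proof (induction A rule: finite_ne_induct)
  case (singleton x)
  then show ?case by simp
next
  case (insert x A)
  then obtain m where m: "m \<in> A" "\<forall>y\<in>A. y \<noteq> m \<longrightarrow> vlt y m"
    by blast
  show ?case
  proof (cases "vlt x m")
    case True
    then have "\<forall>y\<in>insert x A. y \<noteq> m \<longrightarrow> vlt y m" using m(2) by blast
    then show ?thesis using m(1) by blast
  next
    case False
    have "m \<noteq> x" using m(1) insert.hyps(3) by blast
    then have "vlt m x" using False vlt_linear[of m x] by simp
    then have "\<forall>y\<in>insert x A. y \<noteq> x \<longrightarrow> vlt y x"
      using m(2) by (auto intro: vlt_trans[OF _ \<open>vlt m x\<close>])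
    then show ?thesis by blast
  qed
qed

abbreviation vdesc :: "pt list \<Rightarrow> bool" where
  "vdesc \<equiv> sorted_wrt (\<lambda>x y. vlt y x)"

lemma vdesc_exists:
  assumes "finite F"
  shows "\<exists>xs. set xs = F \<and> vdesc xs"
  using assms
proof (induction F rule: finite_remove_induct)
  case empty
  then show ?case by auto
next
  case (remove A)
  obtain x where x: "x \<in> A" "\<forall>y\<in>A. y \<noteq> x \<longrightarrow> vlt y x"
    using vlt_max_exists[OF remove.hyps(1,2)] by blast
  obtain xs where "set xs = A - {x}" "vdesc xs"
    using remove.IH[OF x(1)] by blast
  then have "set (x # xs) = A \<and> vdesc (x # xs)" using x by auto
  then show ?case by blast
qed

lemma vdesc_unique: "vdesc xs \<Longrightarrow> vdesc ys \<Longrightarrow> set xs = set ys \<Longrightarrow> xs = ys"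
proof (induction xs arbitrary: ys)
  case Nil
  then show ?case by auto
next
  case (Cons x xs)
  then obtain y ys' where ys: "ys = y # ys'" by (cases ys) auto
  have "x = y"
  proof (rule ccontr)
    assume "x \<noteq> y"
    then have "vlt x y" "vlt y x" using Cons.prems ys by auto
    then show False using vlt_asym by blast
  qed
  moreover have "x \<notin> set xs" "y \<notin> set ys'"
    using Cons.prems ys by auto
  ultimately have "set xs = set ys'"
    using Cons.prems(3) ys \<open>x = y\<close> by (simp add: insert_ident)
  moreover note \<open>x = y\<close>
  ultimately show ?case using Cons ys by auto
qed

lemma desc_list_spec:
  assumes "finite F"
  shows "set (desc_list F) = F" "vdesc (desc_list F)"
proof -
  have "\<exists>!xs. set xs = F \<and> vdesc xs"
    using vdesc_exists[OF assms] vdesc_unique by metis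
  then show "set (desc_list F) = F" "vdesc (desc_list F)"
    unfolding desc_list_def by (metis (mono_tags, lifting) theI')+
qed

lemma vdesc_above_nth_in_take:
  assumes "vdesc xs" "y \<in> set xs" "k < length xs" "vlt (xs ! k) y"
  shows "y \<in> set (take k xs)"
proof -
  obtain i where i: "i < length xs" "y = xs ! i"
    using assms(2) by (auto simp: in_set_conv_nth)
  have "i < k"
  proof (rule ccontr)
    assume "\<not> i < k"
    then have "i = k \<or> k < i" by auto
    then have "i = k \<or> vlt (xs ! i) (xs ! k)"
      using sorted_wrt_nth_less[OF assms(1)] i(1) by blast
    then show False using assms(4) i(2) vlt_asym by auto
  qed
  then show ?thesis using i by (auto simp: in_set_conv_nth)
qed

definition vlex_less :: "pt set \<Rightarrow> pt set \<Rightarrow> bool" where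
  "vlex_less F G \<longleftrightarrow> (\<exists>x\<in>G - F. \<forall>y. vlt x y \<longrightarrow> (y \<in> F \<longleftrightarrow> y \<in> G))"

lemma lex_less_imp_vlex_less:
  assumes "finite F" "finite G" "lex_less F G"
  shows "vlex_less F G"
proof -
  define as where "as = desc_list F"
  define bs where "bs = desc_list G"
  note A = desc_list_spec[OF assms(1), folded as_def]
  note B = desc_list_spec[OF assms(2), folded bs_def]
  obtain k where k: "k < length as" "k < length bs" "take k as = take k bs"
    and less: "vlt (as ! k) (bs ! k)"
    using assms(3) unfolding lex_less_def Let_def as_def bs_def by blast
  have "bs ! k \<in> G" using B(1) k(2) by auto
  moreover have "bs ! k \<notin> set (take k bs)"
  proof
    assume "bs ! k \<in> set (take k bs)"
    then obtain i where "i < k" "bs ! i = bs ! k"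
      using k(2) by (auto simp: in_set_conv_nth)
    then show False using sorted_wrt_nth_less[OF B(2) \<open>i < k\<close> k(2)] by simp
  qed
  then have "bs ! k \<notin> F"
    using vdesc_above_nth_in_take[OF A(2) _ k(1) less] A(1) k(3) by auto
  moreover have "y \<in> F \<longleftrightarrow> y \<in> G" if "vlt (bs ! k) y" for y
  proof
    assume "y \<in> F"
    then have "y \<in> set (take k as)"
      using vdesc_above_nth_in_take[OF A(2) _ k(1)] A(1) less that vlt_trans by blast
    then show "y \<in> G" using B(1) k(3) by (metis in_set_takeD)
  next
    assume "y \<in> G"
    then have "y \<in> set (take k bs)"
      using vdesc_above_nth_in_take[OF B(2) _ k(2)] B(1) that by blast
    then show "y \<in> F" using A(1) k(3) by (metis in_set_takeD)
  qed
  ultimately show ?thesis unfolding vlex_less_def by blast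
qed

lemma vlex_less_irrefl: "\<not> vlex_less F F"
  by (auto simp: vlex_less_def)

lemma vlex_less_asym:
  assumes "vlex_less F G" shows "\<not> vlex_less G F"
proof
  assume "vlex_less G F"
  then obtain x y where x: "x \<in> G - F" "\<forall>z. vlt x z \<longrightarrow> (z \<in> F \<longleftrightarrow> z \<in> G)"
    and y: "y \<in> F - G" "\<forall>z. vlt y z \<longrightarrow> (z \<in> G \<longleftrightarrow> z \<in> F)"
    using assms unfolding vlex_less_def by blast
  have "x \<noteq> y" using x y by auto
  then show False using vlt_linear x y by blast
qed

lemma vlex_less_trans:
  assumes "vlex_less F G" "vlex_less G H"
  shows "vlex_less F H"
proof -
  obtain x where x: "x \<in> G - F" "\<forall>z. vlt x z \<longrightarrow> (z \<in> F \<longleftrightarrow> z \<in> G)"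
    using assms(1) unfolding vlex_less_def by blast
  obtain y where y: "y \<in> H - G" "\<forall>z. vlt y z \<longrightarrow> (z \<in> G \<longleftrightarrow> z \<in> H)"
    using assms(2) unfolding vlex_less_def by blast
  have "x \<noteq> y" using x y by auto
  then consider "vlt y x" | "vlt x y" using vlt_linear by blast
  then show ?thesis
  proof cases
    case 1
    then have "x \<in> H - F \<and> (\<forall>z. vlt x z \<longrightarrow> (z \<in> F \<longleftrightarrow> z \<in> H))"
      using x y vlt_trans by blast
    then show ?thesis unfolding vlex_less_def by blast
  next
    case 2
    then have "y \<in> H - F \<and> (\<forall>z. vlt y z \<longrightarrow> (z \<in> F \<longleftrightarrow> z \<in> H))"
      using x y vlt_trans by blast
    then show ?thesis unfolding vlex_less_def by blast
  qed
qed

section \<open>Conflicts\<close>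

definition rect_in :: "pt set \<Rightarrow> nat \<Rightarrow> nat \<Rightarrow> nat \<Rightarrow> nat \<Rightarrow> bool" where
  "rect_in P x1 y1 x2 y2 \<longleftrightarrow>
     (\<forall>x y. x1 \<le> x \<longrightarrow> x < x2 \<longrightarrow> y1 \<le> y \<longrightarrow> y < y2 \<longrightarrow> (x, y) \<in> P)"

\<comment> \<open>\<open>u\<close> and \<open>v\<close> are the anti-diagonal corners, upper left and lower right, of an inner interval\<close>
definition conflict :: "pt set \<Rightarrow> pt \<Rightarrow> pt \<Rightarrow> bool" where
  "conflict P u v \<longleftrightarrow> fst u < fst v \<and> snd v < snd u \<and> rect_in P (fst u) (snd v) (fst v) (snd u)"

definition conflict_free :: "pt set \<Rightarrow> pt set \<Rightarrow> bool" where
  "conflict_free P F \<longleftrightarrow> (\<forall>x\<in>F. \<forall>y\<in>F. \<not> conflict P x y)"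

lemma conflict_Pair [simp]:
  "conflict P (x1, y1) (x2, y2) \<longleftrightarrow> x1 < x2 \<and> y2 < y1 \<and> rect_in P x1 y2 x2 y1"
  by (simp add: conflict_def)

lemma conflict_irrefl: "\<not> conflict P x x"
  by (simp add: conflict_def)

lemma rect_in_mono:
  "rect_in P x1 y1 x2 y2 \<Longrightarrow> x1 \<le> x1' \<Longrightarrow> x2' \<le> x2 \<Longrightarrow> y1 \<le> y1' \<Longrightarrow> y2' \<le> y2 \<Longrightarrow>
    rect_in P x1' y1' x2' y2'"
  unfolding rect_in_def by (meson le_trans less_le_trans)

lemma rect_in_vjoin: "rect_in P x1 y1 x2 ym \<Longrightarrow> rect_in P x1 ym x2 y2 \<Longrightarrow> rect_in P x1 y1 x2 y2"
  unfolding rect_in_def by (meson not_le)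

lemma rect_in_hjoin: "rect_in P x1 y1 xm y2 \<Longrightarrow> rect_in P xm y1 x2 y2 \<Longrightarrow> rect_in P x1 y1 x2 y2"
  unfolding rect_in_def by (meson not_le)

lemma inner_interval_iff:
  "inner_interval P u w \<longleftrightarrow> fst u < fst w \<and> snd u < snd w \<and> rect_in P (fst u) (snd u) (fst w) (snd w)"
  unfolding inner_interval_def rect_in_def cell_in_def by (auto simp: Suc_le_eq)

lemma Delta_iff: "F \<in> Delta P \<longleftrightarrow> F \<subseteq> poly_vertices P \<and> conflict_free P F"
proof -
  have "(\<exists>u w. inner_interval P u w \<and> (fst u, snd w) \<in> F \<and> (fst w, snd u) \<in> F) \<longleftrightarrow>
        (\<exists>x\<in>F. \<exists>y\<in>F. conflict P x y)"
  proof
    assume "\<exists>u w. inner_interval P u w \<and> (fst u, snd w) \<in> F \<and> (fst w, snd u) \<in> F"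
    then obtain u w where "inner_interval P u w" "(fst u, snd w) \<in> F" "(fst w, snd u) \<in> F"
      by blast
    moreover from this have "conflict P (fst u, snd w) (fst w, snd u)"
      by (simp add: inner_interval_iff)
    ultimately show "\<exists>x\<in>F. \<exists>y\<in>F. conflict P x y" by blast
  next
    assume "\<exists>x\<in>F. \<exists>y\<in>F. conflict P x y"
    then obtain x y where "x \<in> F" "y \<in> F" "conflict P x y" by blast
    then have "inner_interval P (fst x, snd y) (fst y, snd x) \<and> (fst x, snd x) \<in> F \<and> (fst y, snd y) \<in> F"
      by (simp add: inner_interval_iff conflict_def)
    then show "\<exists>u w. inner_interval P u w \<and> (fst u, snd w) \<in> F \<and> (fst w, snd u) \<in> F"
      by fastforce
  qed
  then show ?thesis unfolding Delta_def conflict_free_def by blast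
qed

lemma rect_in_vertex:
  assumes "rect_in P x1 y1 x2 y2" "x1 < x2" "y1 < y2" "x1 \<le> x" "x \<le> x2" "y1 \<le> y" "y \<le> y2"
  shows "(x, y) \<in> poly_vertices P"
proof -
  define cx where "cx = (if x < x2 then x else x - 1)"
  define cy where "cy = (if y < y2 then y else y - 1)"
  have "(cx, cy) \<in> P"
    using assms unfolding rect_in_def cx_def cy_def by auto
  moreover have "(x, y) \<in> cell_vertices (cx, cy)"
    using assms unfolding cell_vertices_def cx_def cy_def by auto
  ultimately show ?thesis unfolding poly_vertices_def by blast
qed

lemma conflict_freeD: "conflict_free P F \<Longrightarrow> x \<in> F \<Longrightarrow> y \<in> F \<Longrightarrow> \<not> conflict P x y"
  by (simp add: conflict_free_def)

lemma facet_conflict_free: "F \<in> facets (Delta P) \<Longrightarrow> conflict_free P F"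
  by (simp add: facets_def Delta_iff)

lemma facet_maximal:
  assumes "F \<in> facets (Delta P)" "v \<in> poly_vertices P" "v \<notin> F"
  shows "\<exists>y\<in>F. conflict P v y \<or> conflict P y v"
proof (rule ccontr)
  assume "\<not> ?thesis"
  then have "insert v F \<in> Delta P"
    using assms conflict_irrefl by (auto simp: facets_def Delta_iff conflict_free_def)
  moreover have "F \<subset> insert v F" using assms(3) by auto
  ultimately show False using assms(1) by (auto simp: facets_def)
qed

lemma face_in_facet:
  assumes "finite (poly_vertices P)" "X \<in> Delta P"
  shows "\<exists>G\<in>facets (Delta P). X \<subseteq> G"
proof -
  define A where "A = {G \<in> Delta P. X \<subseteq> G}"
  have "A \<subseteq> Pow (poly_vertices P)" unfolding A_def Delta_def by auto
  then have "finite A" using assms(1) by (meson finite_Pow_iff finite_subset)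
  moreover have "X \<in> A" using assms(2) unfolding A_def by auto
  ultimately obtain G where "G \<in> A" "\<forall>H\<in>A. G \<subseteq> H \<longrightarrow> G = H"
    using finite_has_maximal by blast
  then have "G \<in> facets (Delta P)" "X \<subseteq> G"
    unfolding A_def facets_def by blast+
  then show ?thesis by blast
qed

section \<open>Generalized steps\<close>

\<comment> \<open>a generalized step \<open>(px, b), (c, b), (c, rt)\<close> of \<open>F\<close>, without the conditions on the polyomino\<close>
definition step_at :: "pt set \<Rightarrow> nat \<Rightarrow> nat \<Rightarrow> nat \<Rightarrow> nat \<Rightarrow> bool" where
  "step_at F px c b rt \<longleftrightarrow> px < c \<and> b < rt \<and> (px, b) \<in> F \<and> (c, b) \<in> F \<and> (c, rt) \<in> F \<and>
     (\<forall>t. px < t \<longrightarrow> t < c \<longrightarrow> (t, b) \<notin> F) \<and> (\<forall>t. b < t \<longrightarrow> t < rt \<longrightarrow> (c, t) \<notin> F)"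

lemma gen_step_corner_iff:
  "gen_step_corner P F (c, b) \<longleftrightarrow> (\<exists>px rt. step_at F px c b rt \<and> rect_in P px b c rt)"
proof
  assume "gen_step_corner P F (c, b)"
  then obtain p r where "p \<in> F" "(c, b) \<in> F" "r \<in> F" "snd p = b" "fst r = c"
    "fst p < c" "b < snd r" "\<forall>t. fst p < t \<and> t < c \<longrightarrow> (t, b) \<notin> F"
    "\<forall>t. b < t \<and> t < snd r \<longrightarrow> (c, t) \<notin> F" "inner_interval P p r"
    unfolding gen_step_corner_def by auto
  then have "step_at F (fst p) c b (snd r) \<and> rect_in P (fst p) b c (snd r)"
    unfolding step_at_def inner_interval_iff by (metis prod.collapse)
  then show "\<exists>px rt. step_at F px c b rt \<and> rect_in P px b c rt" by blast
next
  assume "\<exists>px rt. step_at F px c b rt \<and> rect_in P px b c rt"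
  then obtain px rt where step: "step_at F px c b rt" and R: "rect_in P px b c rt"
    by blast
  have "(c - 1, b) \<in> P"
    using step R unfolding step_at_def rect_in_def by auto
  moreover have "inner_interval P (px, b) (c, rt)"
    using step R unfolding step_at_def inner_interval_iff by simp
  ultimately show "gen_step_corner P F (c, b)"
    using step unfolding gen_step_corner_def step_at_def
    by (intro exI[of _ "(px, b)"] exI[of _ "(c, rt)"]) (auto intro!: bexI[of _ "(c - 1, b)"])
qed

lemma gen_step_corner_in: "gen_step_corner P F q \<Longrightarrow> q \<in> F"
  unfolding gen_step_corner_def by blast

lemma facet_point_left_in_row:
  assumes F: "F \<in> facets (Delta P)"
    and H: "\<forall>u\<in>F. \<not> conflict P u (a, f)"
    and qF: "(c, b) \<in> F" and R: "rect_in P a b c f" and ac: "a < c" and bf: "b < f"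
    and lowest: "\<And>x y. (x, y) \<in> F \<Longrightarrow> conflict P (a, f) (x, y) \<Longrightarrow> b \<le> y"
  shows "\<exists>x. a \<le> x \<and> x < c \<and> (x, b) \<in> F"
proof (rule ccontr)
  assume "\<not> ?thesis"
  then have "(a, b) \<notin> F" using ac by auto
  moreover have "(a, b) \<in> poly_vertices P" using rect_in_vertex[OF R ac bf] ac bf by simp
  ultimately obtain vx vy where vF: "(vx, vy) \<in> F"
    and vc: "conflict P (a, b) (vx, vy) \<or> conflict P (vx, vy) (a, b)"
    using facet_maximal[OF F] by fastforce
  note nc = conflict_freeD[OF facet_conflict_free[OF F]]
  show False
  proof (cases "conflict P (a, b) (vx, vy)")
    case True
    then have v: "a < vx" "vy < b" "rect_in P a vy vx b" by simp_all
    show False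
    proof (cases "vx \<le> c")
      case True
      then have "rect_in P a vy vx f" using rect_in_vjoin[OF v(3)] rect_in_mono[OF R] by auto
      then have "b \<le> vy" using lowest[OF vF] v bf by auto
      then show False using v by auto
    next
      case False
      then have "conflict P (c, b) (vx, vy)" using rect_in_mono[OF v(3)] ac v by auto
      then show False using nc qF vF by blast
    qed
  next
    case False
    then have v: "vx < a" "b < vy" "rect_in P vx b a vy" using vc by auto
    show False
    proof (cases "vy \<le> f")
      case True
      then have "conflict P (vx, vy) (c, b)"
        using rect_in_hjoin[OF v(3)] rect_in_mono[OF R] v ac by auto
      then show False using nc qF vF by blast
    next
      case False
      then have "conflict P (vx, vy) (a, f)" using rect_in_mono[OF v(3)] v bf by auto
      then show False using H vF by blast
    qed
  qed
qed

lemma facet_no_point_right_of_gap: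
  assumes F: "F \<in> facets (Delta P)"
    and H: "\<forall>u\<in>F. \<not> conflict P u (a, f)"
    and qF: "(c, b) \<in> F" and R: "rect_in P a b c f" and ac: "a < c" and bf: "b < f"
    and rightmost: "\<And>x. (x, b) \<in> F \<Longrightarrow> conflict P (a, f) (x, b) \<Longrightarrow> x \<le> c"
    and gap: "\<And>t. b < t \<Longrightarrow> t < f \<Longrightarrow> (c, t) \<notin> F"
  shows "\<nexists>x y. (x, y) \<in> F \<and> c < x \<and> b < y \<and> y < f \<and> rect_in P c y x f"
proof
  let ?W = "\<lambda>(x, y). (x, y) \<in> F \<and> c < x \<and> b < y \<and> y < f \<and> rect_in P c y x f"
  assume "\<exists>x y. (x, y) \<in> F \<and> c < x \<and> b < y \<and> y < f \<and> rect_in P c y x f"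
  then obtain v where "?W v" by auto
  then obtain w where "?W w" and lowest: "\<And>w'. ?W w' \<Longrightarrow> snd w \<le> snd w'"
    using ex_has_least_nat[of ?W v snd] by blast
  moreover obtain vx vy where w: "w = (vx, vy)" by (cases w)
  ultimately have vF: "(vx, vy) \<in> F" and cvx: "c < vx" and bvy: "b < vy" and vyf: "vy < f"
    and Rv: "rect_in P c vy vx f" by auto
  note nc = conflict_freeD[OF facet_conflict_free[OF F]]
  have "(c, vy) \<notin> F" using gap bvy vyf by blast
  moreover have "(c, vy) \<in> poly_vertices P" using rect_in_vertex[OF R ac bf] ac bvy vyf by simp
  ultimately obtain yx yy where yF: "(yx, yy) \<in> F"
    and yc: "conflict P (c, vy) (yx, yy) \<or> conflict P (yx, yy) (c, vy)"
    using facet_maximal[OF F] by fastforce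
  show False
  proof (cases "conflict P (c, vy) (yx, yy)")
    case True
    then have y: "c < yx" "yy < vy" "rect_in P c yy yx vy" by simp_all
    consider "yy < b" | "yy = b" | "b < yy" by linarith
    then show False
    proof cases
      case 1
      then have "conflict P (c, b) (yx, yy)" using rect_in_mono[OF y(3)] y bvy by auto
      then show False using nc qF yF by blast
    next
      case 2
      show False
      proof (cases "vx < yx")
        case True
        then have "conflict P (vx, vy) (yx, b)" using rect_in_mono[OF y(3)] 2 cvx bvy by auto
        then show False using nc vF yF 2 by blast
      next
        case False
        then have "rect_in P c b yx f" using rect_in_vjoin[OF y(3)] rect_in_mono[OF Rv] 2 by auto
        then have "conflict P (a, f) (yx, b)" using rect_in_hjoin[OF R] ac y bf by auto
        then show False using rightmost yF 2 y by fastforce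
      qed
    next
      case 3
      show False
      proof (cases "vx < yx")
        case True
        then have "conflict P (vx, vy) (yx, yy)" using rect_in_mono[OF y(3)] cvx y by auto
        then show False using nc vF yF by blast
      next
        case False
        then have "rect_in P c yy yx f" using rect_in_vjoin[OF y(3)] rect_in_mono[OF Rv] by auto
        then have "?W (yx, yy)" using yF y 3 vyf by auto
        then show False using lowest[of "(yx, yy)"] w y by simp
      qed
    qed
  next
    case False
    then have y: "yx < c" "vy < yy" "rect_in P yx vy c yy" using yc by auto
    show False
    proof (cases "yy \<le> f")
      case True
      then have "conflict P (yx, yy) (vx, vy)"
        using rect_in_hjoin[OF y(3)] rect_in_mono[OF Rv] y cvx by auto
      then show False using nc vF yF by blast
    next
      case False
      show False
      proof (cases "yx < a")
        case True
        then have "conflict P (yx, yy) (a, f)" using rect_in_mono[OF y(3)] vyf ac False by auto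
        then show False using H yF by blast
      next
        case False2: False
        then have "rect_in P yx b c vy" using rect_in_mono[OF R] vyf by auto
        then have "conflict P (yx, yy) (c, b)" using rect_in_vjoin y bvy by auto
        then show False using nc qF yF by blast
      qed
    qed
  qed
qed

lemma facet_point_above_in_column:
  assumes F: "F \<in> facets (Delta P)"
    and H: "\<forall>u\<in>F. \<not> conflict P u (a, f)"
    and qF: "(c, b) \<in> F" and R: "rect_in P a b c f" and ac: "a < c" and bf: "b < f"
    and rightmost: "\<And>x. (x, b) \<in> F \<Longrightarrow> conflict P (a, f) (x, b) \<Longrightarrow> x \<le> c"
  shows "\<exists>t. b < t \<and> t \<le> f \<and> (c, t) \<in> F"
proof (rule ccontr)
  assume "\<not> ?thesis"
  then have gap: "\<And>t. b < t \<Longrightarrow> t < f \<Longrightarrow> (c, t) \<notin> F" and "(c, f) \<notin> F"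
    using bf by auto
  moreover have "(c, f) \<in> poly_vertices P" using rect_in_vertex[OF R ac bf] ac bf by simp
  ultimately obtain yx yy where yF: "(yx, yy) \<in> F"
    and yc: "conflict P (c, f) (yx, yy) \<or> conflict P (yx, yy) (c, f)"
    using facet_maximal[OF F] by fastforce
  note nc = conflict_freeD[OF facet_conflict_free[OF F]]
  show False
  proof (cases "conflict P (c, f) (yx, yy)")
    case True
    then have y: "c < yx" "yy < f" "rect_in P c yy yx f" by simp_all
    consider "yy < b" | "yy = b" | "b < yy" by linarith
    then show False
    proof cases
      case 1
      then have "conflict P (c, b) (yx, yy)" using rect_in_mono[OF y(3)] y bf by auto
      then show False using nc qF yF by blast
    next
      case 2
      then have "conflict P (a, f) (yx, b)" using rect_in_hjoin[OF R] y ac bf by auto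
      then show False using rightmost yF 2 y by fastforce
    next
      case 3
      then show False
        using facet_no_point_right_of_gap[OF F H qF R ac bf rightmost gap] yF y by blast
    qed
  next
    case False
    then have y: "yx < c" "f < yy" "rect_in P yx f c yy" using yc by auto
    show False
    proof (cases "yx < a")
      case True
      then have "conflict P (yx, yy) (a, f)" using rect_in_mono[OF y(3)] y ac by auto
      then show False using H yF by blast
    next
      case False
      then have "rect_in P yx b c f" using rect_in_mono[OF R] by auto
      then have "conflict P (yx, yy) (c, b)" using rect_in_vjoin y bf by auto
      then show False using nc qF yF by blast
    qed
  qed
qed

lemma facet_gen_step_conflicting:
  assumes F: "F \<in> facets (Delta P)" "finite F"
    and partner: "\<exists>u\<in>F. conflict P (a, f) u"
    and H: "\<forall>u\<in>F. \<not> conflict P u (a, f)"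
  shows "\<exists>q. gen_step_corner P F q \<and> conflict P (a, f) q"
proof -
  let ?C = "\<lambda>u. u \<in> F \<and> conflict P (a, f) u"
  obtain w where w: "?C w" and lowest: "\<And>u. ?C u \<Longrightarrow> snd w \<le> snd u"
    using partner ex_has_least_nat[of ?C _ snd] by blast
  define b where "b = snd w"
  define X where "X = {x. ?C (x, b)}"
  have "X \<subseteq> fst ` F" unfolding X_def by force
  then have "finite X" using F(2) finite_surj by blast
  moreover have "fst w \<in> X" using w unfolding X_def b_def by (cases w) simp
  ultimately have "Max X \<in> X" and rightmost: "\<And>x. ?C (x, b) \<Longrightarrow> x \<le> Max X"
    using Max_in[of X] Max_ge[of X] unfolding X_def by blast+
  define c where "c = Max X"
  have cX: "?C (c, b)" using \<open>Max X \<in> X\<close> unfolding X_def c_def by (rule CollectD)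
  then have qF: "(c, b) \<in> F" and ac: "a < c" and bf: "b < f" and R: "rect_in P a b c f"
    by auto
  have lowest': "\<And>x y. (x, y) \<in> F \<Longrightarrow> conflict P (a, f) (x, y) \<Longrightarrow> b \<le> y"
    using lowest unfolding b_def by fastforce
  have rightmost': "\<And>x. (x, b) \<in> F \<Longrightarrow> conflict P (a, f) (x, b) \<Longrightarrow> x \<le> c"
    using rightmost unfolding c_def by blast
  let ?L = "\<lambda>x. a \<le> x \<and> x < c \<and> (x, b) \<in> F"
  have "\<exists>x. ?L x"
    by (rule facet_point_left_in_row[OF F(1) H qF R ac bf]) (rule lowest')
  then obtain px where px: "?L px" and left_max: "\<And>x. ?L x \<Longrightarrow> x \<le> px"
    using Nat.ex_has_greatest_nat[of ?L _ c] by auto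
  have left_gap: "(t, b) \<notin> F" if "px < t" "t < c" for t
    using left_max[of t] px that by auto
  let ?A = "\<lambda>t. b < t \<and> t \<le> f \<and> (c, t) \<in> F"
  obtain t0 where "?A t0"
    using facet_point_above_in_column[OF F(1) H qF R ac bf rightmost'] by blast
  then obtain rt where rt: "?A rt" and lowest_above: "\<And>t. ?A t \<Longrightarrow> rt \<le> t"
    using ex_has_least_nat[of ?A t0 id] by auto
  have up_gap: "(c, t) \<notin> F" if "b < t" "t < rt" for t
    using lowest_above[of t] rt that by auto
  have "step_at F px c b rt"
    unfolding step_at_def using px rt qF left_gap up_gap by blast
  moreover have "rect_in P px b c rt"
    using rect_in_mono[OF R] px rt by auto
  ultimately have "gen_step_corner P F (c, b)"
    unfolding gen_step_corner_iff by blast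
  then show ?thesis using cX by blast
qed

section \<open>Exchanging a step corner\<close>

\<comment> \<open>the only property of grid polyominoes the argument needs\<close>
definition diagonal_closed :: "pt set \<Rightarrow> bool" where
  "diagonal_closed P \<longleftrightarrow> (\<forall>x0 x1 x2 y0 y1 y2. x0 < x1 \<longrightarrow> x1 < x2 \<longrightarrow> y0 < y1 \<longrightarrow> y1 < y2 \<longrightarrow>
     rect_in P x0 y1 x1 y2 \<longrightarrow> rect_in P x1 y0 x2 y1 \<longrightarrow>
     rect_in P x0 y0 x1 y1 \<or> rect_in P x1 y1 x2 y2)"

lemma step_flip_no_conflict_from:
  assumes nc: "conflict_free P F" and step: "step_at F px c b rt" and R: "rect_in P px b c rt"
    and yF: "(yx, yy) \<in> F" and yq: "(yx, yy) \<noteq> (c, b)"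
  shows "\<not> conflict P (px, rt) (yx, yy)"
proof
  assume "conflict P (px, rt) (yx, yy)"
  then have y: "px < yx" "yy < rt" "rect_in P px yy yx rt" by simp_all
  note nc' = conflict_freeD[OF nc]
  have s: "px < c" "b < rt" "(px, b) \<in> F" "(c, b) \<in> F" "(c, rt) \<in> F"
    "\<And>t. px < t \<Longrightarrow> t < c \<Longrightarrow> (t, b) \<notin> F" "\<And>t. b < t \<Longrightarrow> t < rt \<Longrightarrow> (c, t) \<notin> F"
    using step unfolding step_at_def by auto
  consider "yy < b" | "yy = b" "yx < c" | "yx = c" "b < yy" | "c < yx" "b \<le> yy" | "yx < c" "b < yy"
    using yq by fastforce
  then show False
  proof cases
    case 1
    then have "conflict P (px, b) (yx, yy)" using rect_in_mono[OF y(3)] y s by auto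
    then show False using nc' s yF by blast
  next
    case 2
    then show False using s(6) y yF by blast
  next
    case 3
    then show False using s(7) y yF by blast
  next
    case 4
    then have "conflict P (c, rt) (yx, yy)" using rect_in_mono[OF y(3)] y s by auto
    then show False using nc' s yF by blast
  next
    case 5
    then have "conflict P (yx, yy) (c, b)" using rect_in_mono[OF R] y by auto
    then show False using nc' s yF by blast
  qed
qed

lemma step_flip_no_conflict_to:
  assumes dc: "diagonal_closed P" and nc: "conflict_free P F"
    and step: "step_at F px c b rt" and R: "rect_in P px b c rt" and yF: "(yx, yy) \<in> F"
  shows "\<not> conflict P (yx, yy) (px, rt)"
proof
  assume "conflict P (yx, yy) (px, rt)"
  then have y: "yx < px" "rt < yy" "rect_in P yx rt px yy" by simp_all
  note nc' = conflict_freeD[OF nc]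
  have s: "px < c" "b < rt" "(px, b) \<in> F" "(c, rt) \<in> F"
    using step unfolding step_at_def by auto
  have "rect_in P yx b px rt \<or> rect_in P px rt c yy"
    using dc y s R unfolding diagonal_closed_def by blast
  then show False
  proof
    assume "rect_in P yx b px rt"
    then have "conflict P (yx, yy) (px, b)" using rect_in_vjoin y s by auto
    then show False using nc' s yF by blast
  next
    assume "rect_in P px rt c yy"
    then have "conflict P (yx, yy) (c, rt)" using rect_in_hjoin y s by auto
    then show False using nc' s yF by blast
  qed
qed

lemma gen_step_flip:
  assumes dc: "diagonal_closed P" and FD: "F \<in> Delta P" and gs: "gen_step_corner P F q"
  shows "\<exists>z. z \<notin> F \<and> vlt q z \<and> insert z (F - {q}) \<in> Delta P"
proof -
  obtain c b where q: "q = (c, b)" by (cases q)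
  then obtain px rt where step: "step_at F px c b rt" and R: "rect_in P px b c rt"
    using gs gen_step_corner_iff by blast
  have s: "px < c" "b < rt" "(c, b) \<in> F" using step unfolding step_at_def by auto
  have nc: "conflict_free P F" and FV: "F \<subseteq> poly_vertices P" using FD by (auto simp: Delta_iff)
  have "conflict P (px, rt) (c, b)" using R s by simp
  then have "(px, rt) \<notin> F" using conflict_freeD[OF nc] s by blast
  moreover have "vlt q (px, rt)" using q s by (simp add: vlt_def)
  moreover have "(px, rt) \<in> poly_vertices P" using rect_in_vertex[OF R s(1,2)] s by simp
  then have "insert (px, rt) (F - {q}) \<subseteq> poly_vertices P" using FV by blast
  moreover have "conflict_free P (insert (px, rt) (F - {q}))"
    using nc step_flip_no_conflict_from[OF nc step R] step_flip_no_conflict_to[OF dc nc step R]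
      conflict_irrefl q unfolding conflict_free_def by (metis DiffE insertE prod.collapse singletonI)
  ultimately show ?thesis unfolding Delta_iff by blast
qed

lemma grid_diagonal_closed:
  assumes G: "grid_data m n r s a b"
  shows "diagonal_closed (grid_cells m n r s a b)"
  unfolding diagonal_closed_def
proof (intro allI impI)
  let ?P = "grid_cells m n r s a b"
  fix x0 x1 x2 y0 y1 y2
  assume h: "x0 < x1" "x1 < x2" "y0 < y1" "y1 < y2"
    and A: "rect_in ?P x0 y1 x1 y2" and B: "rect_in ?P x1 y0 x2 y1"
  show "rect_in ?P x0 y0 x1 y1 \<or> rect_in ?P x1 y1 x2 y2"
  proof (rule ccontr)
    assume "\<not> ?thesis"
    then obtain u v u' v' where uv: "x0 \<le> u" "u < x1" "y0 \<le> v" "v < y1" "(u, v) \<notin> ?P"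
      and uv': "x1 \<le> u'" "u' < x2" "y1 \<le> v'" "v' < y2" "(u', v') \<notin> ?P"
      unfolding rect_in_def by blast
    have "(u, y1) \<in> ?P" "(x1, v) \<in> ?P" "(x0, v') \<in> ?P" "(u', y0) \<in> ?P"
      using A B uv uv' h unfolding rect_in_def by auto
    then have bounds: "1 \<le> u" "u + 1 \<le> m" "1 \<le> v" "v + 1 \<le> n"
      "1 \<le> u'" "u' + 1 \<le> m" "1 \<le> v'" "v' + 1 \<le> n"
      unfolding grid_cells_def cell_in_def by auto
    obtain i j where ij: "i \<in> {1..r}" "j \<in> {1..s}" "cell_in (u, v) (a i j) (b i j)"
      using uv(5) bounds unfolding grid_cells_def cell_in_def by auto
    obtain i' j' where ij': "i' \<in> {1..r}" "j' \<in> {1..s}" "cell_in (u', v') (a i' j') (b i' j')"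
      using uv'(5) bounds unfolding grid_cells_def cell_in_def by auto
    \<comment> \<open>hole columns depend only on the first index and hole rows only on the second\<close>
    have "fst (a i j) = fst (a i j')" "fst (b i j) = fst (b i j')"
      "snd (a i j') = snd (a i' j')" "snd (b i j') = snd (b i' j')"
      using G ij ij' unfolding grid_data_def by blast+
    then have "cell_in (u, v') (a i j') (b i j')"
      using ij(3) ij'(3) unfolding cell_in_def by auto
    then have "(u, v') \<notin> ?P" using ij(1) ij'(2) unfolding grid_cells_def by blast
    moreover have "(u, v') \<in> ?P" using A uv uv' unfolding rect_in_def by auto
    ultimately show False by contradiction
  qed
qed

lemma grid_vertices_finite: "finite (poly_vertices (grid_cells m n r s a b))"
proof -
  have "grid_cells m n r s a b \<subseteq> {..m} \<times> {..n}"
    unfolding grid_cells_def cell_in_def by auto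
  then have "finite (grid_cells m n r s a b)" by (rule finite_subset) auto
  then show ?thesis unfolding poly_vertices_def cell_vertices_def by auto
qed

section \<open>The shelling\<close>

lemma facet_finite: "finite (poly_vertices P) \<Longrightarrow> G \<in> facets (Delta P) \<Longrightarrow> finite G"
  unfolding facets_def Delta_def by (auto intro: finite_subset)

lemma later_facet_has_gen_step_outside:
  assumes F: "F \<in> facets (Delta P)" "finite F" and G: "G \<in> facets (Delta P)"
    and FG: "vlex_less F G"
  shows "\<exists>q. gen_step_corner P F q \<and> q \<notin> G"
proof -
  obtain x where x: "x \<in> G - F" and agree: "\<And>y. vlt x y \<Longrightarrow> y \<in> F \<longleftrightarrow> y \<in> G"
    using FG unfolding vlex_less_def by blast
  note ncG = conflict_freeD[OF facet_conflict_free[OF G]]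
  have no_upper: "\<forall>u\<in>F. \<not> conflict P u x"
  proof (intro ballI notI)
    fix u assume "u \<in> F" "conflict P u x"
    moreover from this have "u \<in> G" using agree by (auto simp: conflict_def vlt_def)
    ultimately show False using ncG x by blast
  qed
  have "x \<in> poly_vertices P" using G x by (auto simp: facets_def Delta_def)
  then have "\<exists>u\<in>F. conflict P x u"
    using facet_maximal[OF F(1)] x no_upper by blast
  then obtain q where "gen_step_corner P F q" "conflict P x q"
    using facet_gen_step_conflicting[OF F, of "fst x" "snd x"] no_upper by auto
  moreover from this have "q \<notin> G" using ncG x by blast
  ultimately show ?thesis by blast
qed

lemma gen_step_corner_earlier_facet:
  assumes dc: "diagonal_closed P" and finV: "finite (poly_vertices P)"
    and F: "F \<in> facets (Delta P)" and gs: "gen_step_corner P F q"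
  shows "\<exists>G\<in>facets (Delta P). vlex_less F G \<and> F - {q} \<subseteq> G"
proof -
  obtain z where zF: "z \<notin> F" and qz: "vlt q z" and flip: "insert z (F - {q}) \<in> Delta P"
    using gen_step_flip[OF dc _ gs] F by (auto simp: facets_def)
  obtain G where G: "G \<in> facets (Delta P)" and sub: "insert z (F - {q}) \<subseteq> G"
    using face_in_facet[OF finV flip] by blast
  have "q \<notin> G"
  proof
    assume "q \<in> G"
    then have "F \<subset> G" using sub zF gen_step_corner_in[OF gs] by auto
    then show False using F G by (auto simp: facets_def)
  qed
  obtain x where x: "x \<in> G - F" and top: "\<forall>y\<in>G - F. y \<noteq> x \<longrightarrow> vlt y x"
    using vlt_max_exists[of "G - F"] facet_finite[OF finV G] sub zF by blast
  have "vlt q x"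
    using top sub zF qz vlt_trans by (metis Diff_iff insert_subset)
  have "y \<in> F \<longleftrightarrow> y \<in> G" if "vlt x y" for y
  proof
    assume "y \<in> F"
    then show "y \<in> G"
      using sub that \<open>vlt q x\<close> vlt_asym by (metis Diff_iff insert_subset singletonD subsetD)
  next
    assume "y \<in> G"
    then show "y \<in> F" using top that vlt_asym by (metis Diff_iff vlt_irrefl)
  qed
  then have "vlex_less F G" unfolding vlex_less_def using x by blast
  then show ?thesis using G sub by blast
qed

lemma vlex_less_chain:
  assumes "\<And>i. i < N \<Longrightarrow> vlex_less (Fs (Suc i)) (Fs i)"
  shows "k < j \<Longrightarrow> j \<le> N \<Longrightarrow> vlex_less (Fs j) (Fs k)"
proof (induction j)
  case 0
  then show ?case by simp
next
  case (Suc j)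
  show ?case
  proof (cases "k = j")
    case True
    then show ?thesis using assms Suc.prems by simp
  next
    case False
    then have "vlex_less (Fs j) (Fs k)" using Suc by simp
    then show ?thesis using vlex_less_trans[OF assms[of j]] Suc.prems by simp
  qed
qed

lemma lex_order_restriction:
  fixes Fs :: "nat \<Rightarrow> pt set"
  assumes dc: "diagonal_closed P" and finV: "finite (poly_vertices P)"
    and img: "Fs ` {0..N} = facets (Delta P)"
    and chain: "\<And>j k. k < j \<Longrightarrow> j \<le> N \<Longrightarrow> vlex_less (Fs j) (Fs k)"
    and j: "j \<le> N"
  shows "gen (Fs ` {0..<j}) \<inter> gen {Fs j} = gen {Fs j - {v} | v. gen_step_corner P (Fs j) v}"
proof -
  have facet: "Fs i \<in> facets (Delta P)" if "i \<le> N" for i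
    using img that by (metis atLeastAtMost_iff imageI le0)
  show ?thesis
  proof (intro equalityI subsetI)
    fix X
    assume "X \<in> gen (Fs ` {0..<j}) \<inter> gen {Fs j}"
    then obtain k where k: "k < j" "X \<subseteq> Fs k" "X \<subseteq> Fs j" unfolding gen_def by auto
    then obtain q where "gen_step_corner P (Fs j) q" "q \<notin> Fs k"
      using later_facet_has_gen_step_outside[OF facet _ facet] facet_finite[OF finV facet]
        chain j by (meson le_trans less_imp_le)
    then show "X \<in> gen {Fs j - {v} | v. gen_step_corner P (Fs j) v}"
      using k unfolding gen_def by blast
  next
    fix X
    assume "X \<in> gen {Fs j - {v} | v. gen_step_corner P (Fs j) v}"
    then obtain v where v: "gen_step_corner P (Fs j) v" "X \<subseteq> Fs j - {v}"
      unfolding gen_def by blast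
    obtain G where G: "G \<in> facets (Delta P)" "vlex_less (Fs j) G" "Fs j - {v} \<subseteq> G"
      using gen_step_corner_earlier_facet[OF dc finV facet[OF j] v(1)] by blast
    then obtain k where k: "k \<le> N" "G = Fs k" using img by (metis atLeastAtMost_iff imageE)
    have "k < j"
      using chain[of j k] G(2) k vlex_less_irrefl vlex_less_asym j by (metis linorder_neqE_nat)
    then show "X \<in> gen (Fs ` {0..<j}) \<inter> gen {Fs j}"
      using v(2) G(3) k unfolding gen_def by (auto intro!: bexI[of _ k])
  qed
qed

lemma shelling_orderI:
  fixes Fs :: "nat \<Rightarrow> 'a set"
  assumes "inj_on Fs {0..N}" "Fs ` {0..N} = facets D"
    and restriction: "\<And>j. j \<in> {1..N} \<Longrightarrow>
      gen (Fs ` {0..<j}) \<inter> gen {Fs j} = gen {Fs j - {v} | v. Q j v}"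
    and corner_in: "\<And>j v. Q j v \<Longrightarrow> v \<in> Fs j"
  shows "shelling_order D Fs N"
  unfolding shelling_order_def
proof (intro conjI assms ballI)
  fix j assume j: "j \<in> {1..N}"
  let ?M = "{Fs j - {v} | v. Q j v}"
  have "{} \<in> gen (Fs ` {0..<j}) \<inter> gen {Fs j}"
    using j unfolding gen_def by (auto intro!: exI[of _ 0])
  then have "{} \<in> gen ?M" using restriction[OF j] by simp
  then have "?M \<noteq> {}" unfolding gen_def by blast
  moreover have "\<forall>G\<in>?M. max_proper_face (Fs j) G"
    using corner_in unfolding max_proper_face_def by auto
  ultimately show "\<exists>\<M>. \<M> \<noteq> {} \<and> (\<forall>G\<in>\<M>. max_proper_face (Fs j) G) \<and>
      gen (Fs ` {0..<j}) \<inter> gen {Fs j} = gen \<M>"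
    using restriction[OF j] by (intro exI[of _ ?M]) simp
qed

theorem theorem3p6:
  fixes m n r s :: nat and a b :: "nat \<Rightarrow> nat \<Rightarrow> nat \<times> nat"
    and Fs :: "nat \<Rightarrow> (nat \<times> nat) set" and N :: nat
  assumes "grid_data m n r s a b"
    and "Fs ` {0..N} = facets (Delta (grid_cells m n r s a b))"
    and "\<forall>i<N. lex_less (Fs (Suc i)) (Fs i)"
  shows "(\<forall>j\<in>{1..N}.
            gen (Fs ` {0..<j}) \<inter> gen {Fs j}
          = gen {Fs j - {v} | v. gen_step_corner (grid_cells m n r s a b) (Fs j) v})
         \<and> shelling_order (Delta (grid_cells m n r s a b)) Fs N"
proof -
  let ?P = "grid_cells m n r s a b"
  have "finite (Fs i)" if "i \<le> N" for i
    using assms(2) facet_finite[OF grid_vertices_finite] that by (metis atLeastAtMost_iff imageI le0)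
  then have "\<And>i. i < N \<Longrightarrow> vlex_less (Fs (Suc i)) (Fs i)"
    using assms(3) lex_less_imp_vlex_less by simp
  then have chain: "\<And>j k. k < j \<Longrightarrow> j \<le> N \<Longrightarrow> vlex_less (Fs j) (Fs k)"
    by (rule vlex_less_chain)
  have restriction: "\<And>j. j \<in> {1..N} \<Longrightarrow> gen (Fs ` {0..<j}) \<inter> gen {Fs j}
      = gen {Fs j - {v} | v. gen_step_corner ?P (Fs j) v}"
    using lex_order_restriction[OF grid_diagonal_closed[OF assms(1)] grid_vertices_finite assms(2) chain]
    by simp
  have "inj_on Fs {0..N}"
    by (rule inj_onI) (metis atLeastAtMost_iff chain linorder_neqE_nat vlex_less_irrefl)
  then have "shelling_order (Delta ?P) Fs N"
    using shelling_orderI[where Q = "\<lambda>j. gen_step_corner ?P (Fs j)", OF _ assms(2) restriction]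
      gen_step_corner_in by blast
  then show ?thesis using restriction by blast
qed

end
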